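(* Let $\mathcal{S}$ be a state space, $\mathcal{A}$ a finite action space, $\pi_{\mathrm{ref}}$ a full-support policy, $\beta>0$, $R>0$, $r^*:\mathcal{S}\times\mathcal{A}\to[0,R]$, and let $\Pi$ be a finite policy class satisfying (I) $\pi^*_{r^*}\in\Pi$ and (II) $|\log(\pi(a|s)/\pi_{\mathrm{ref}}(a|s))|\le R/\beta$ for all $\pi\in\Pi$ and all $(s,a)$. Then $\mathrm{conv}(\Pi)$ also satisfies (I) and (II).
   Context: $\pi^*_{r^*}(a|s)\propto\pi_{\mathrm{ref}}(a|s)e^{r^*(s,a)/\beta}$. $\mathrm{conv}(\Pi)$ is the set of all policies $\sum_{i=1}^n\lambda^i\pi^i$ (pointwise in $(a|s)$) with $n\ge1$, $\lambda^i\ge0$, $\sum_i\lambda^i=1$, $\pi^i\in\Pi$. *)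

theory Defs
  imports Complex_Main
begin

definition is_policy :: "('s \<Rightarrow> 'a::finite \<Rightarrow> real) \<Rightarrow> bool" where
  "is_policy p \<longleftrightarrow> (\<forall>s. (\<forall>a. 0 \<le> p s a) \<and> (\<Sum>a\<in>UNIV. p s a) = 1)"

text \<open>Optimal KL-regularised policy: pi*(a|s) proportional to pi_ref(a|s) exp(r(s,a)/beta).\<close>
definition opt_policy ::
  "('s \<Rightarrow> 'a::finite \<Rightarrow> real) \<Rightarrow> real \<Rightarrow> ('s \<Rightarrow> 'a \<Rightarrow> real) \<Rightarrow> ('s \<Rightarrow> 'a \<Rightarrow> real)" where
  "opt_policy pref \<beta> r = (\<lambda>s a. pref s a * exp (r s a / \<beta>) /
       (\<Sum>b\<in>UNIV. pref s b * exp (r s b / \<beta>)))"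

definition conv_pol :: "('s \<Rightarrow> 'a \<Rightarrow> real) set \<Rightarrow> ('s \<Rightarrow> 'a \<Rightarrow> real) set" where
  "conv_pol P = {q. \<exists>(n::nat) (l::nat \<Rightarrow> real) (p::nat \<Rightarrow> ('s \<Rightarrow> 'a \<Rightarrow> real)).
      n \<ge> 1 \<and> (\<forall>i<n. l i \<ge> 0) \<and> (\<Sum>i<n. l i) = 1 \<and> (\<forall>i<n. p i \<in> P) \<and>
      q = (\<lambda>s a. \<Sum>i<n. l i * p i s a)}"

text \<open>Condition (II): the log-ratio is finite (pi(a|s) > 0) and bounded by R/beta.\<close>
definition bounded_logratio ::
  "('s \<Rightarrow> 'a \<Rightarrow> real) \<Rightarrow> real \<Rightarrow> real \<Rightarrow> ('s \<Rightarrow> 'a \<Rightarrow> real) set \<Rightarrow> bool" where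
  "bounded_logratio pref R \<beta> P \<longleftrightarrow>
     (\<forall>p\<in>P. \<forall>s a. p s a > 0 \<and> \<bar>ln (p s a / pref s a)\<bar> \<le> R / \<beta>)"

end

theory Submission
  imports Defs
begin

text \<open>For positive reference values, condition (II) says exactly that every
  \<open>\<pi>(a|s)\<close> lies in the interval \<open>[exp(-R/\<beta>) \<pi>\<^sub>r\<^sub>e\<^sub>f(a|s), exp(R/\<beta>) \<pi>\<^sub>r\<^sub>e\<^sub>f(a|s)]\<close>.
  Such pointwise interval constraints survive convex combinations, and (I) holds for the
  hull because every class is contained in its convex hull.\<close>

lemma abs_ln_le_iff:
  fixes x c :: real
  assumes "x > 0"
  shows "\<bar>ln x\<bar> \<le> c \<longleftrightarrow> exp (-c) \<le> x \<and> x \<le> exp c"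
proof -
  have "ln x \<le> c \<longleftrightarrow> x \<le> exp c" "-c \<le> ln x \<longleftrightarrow> exp (-c) \<le> x"
    using assms by (metis exp_le_cancel_iff exp_ln)+
  then show ?thesis by linarith
qed

lemma convex_sum_in_interval:
  fixes l x :: "nat \<Rightarrow> real"
  assumes "\<forall>i<n. l i \<ge> 0" and "(\<Sum>i<n. l i) = 1"
    and "\<forall>i<n. lo \<le> x i \<and> x i \<le> hi"
  shows "lo \<le> (\<Sum>i<n. l i * x i) \<and> (\<Sum>i<n. l i * x i) \<le> hi"
proof
  have "lo = (\<Sum>i<n. l i * lo)"
    using assms(2) by (simp add: sum_distrib_right[symmetric])
  also have "\<dots> \<le> (\<Sum>i<n. l i * x i)"
    using assms(1,3) by (intro sum_mono mult_left_mono) auto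
  finally show "lo \<le> (\<Sum>i<n. l i * x i)" .
next
  have "(\<Sum>i<n. l i * x i) \<le> (\<Sum>i<n. l i * hi)"
    using assms(1,3) by (intro sum_mono mult_left_mono) auto
  also have "\<dots> = hi"
    using assms(2) by (simp add: sum_distrib_right[symmetric])
  finally show "(\<Sum>i<n. l i * x i) \<le> hi" .
qed

lemma subset_conv_pol: "P \<subseteq> conv_pol P"
proof
  fix p assume "p \<in> P"
  then show "p \<in> conv_pol P"
    unfolding conv_pol_def
    by (intro CollectI exI[of _ 1] exI[of _ "\<lambda>_. 1"] exI[of _ "\<lambda>_. p"]) simp
qed

lemma conv_pol_pointwise_interval:
  assumes "\<forall>p\<in>P. \<forall>s a. lo s a \<le> p s a \<and> p s a \<le> hi s a"
    and "q \<in> conv_pol P"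
  shows "lo s a \<le> q s a \<and> q s a \<le> hi s a"
proof -
  from assms(2) obtain n :: nat and l p where l: "\<forall>i<n. l i \<ge> 0" "(\<Sum>i<n. l i) = 1"
    and p: "\<forall>i<n. p i \<in> P" and q: "q = (\<lambda>s a. \<Sum>i<n. l i * p i s a)"
    unfolding conv_pol_def by blast
  show ?thesis
    unfolding q using p assms(1) by (intro convex_sum_in_interval[OF l]) auto
qed

lemma bounded_logratio_iff_interval:
  fixes pref :: "'s \<Rightarrow> 'a \<Rightarrow> real"
  assumes "\<forall>s a. pref s a > 0"
  shows "bounded_logratio pref R \<beta> P \<longleftrightarrow>
    (\<forall>p\<in>P. \<forall>s a. exp (-(R/\<beta>)) * pref s a \<le> p s a \<and> p s a \<le> exp (R/\<beta>) * pref s a)"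
proof -
  have "p s a > 0 \<and> \<bar>ln (p s a / pref s a)\<bar> \<le> R/\<beta> \<longleftrightarrow>
      exp (-(R/\<beta>)) * pref s a \<le> p s a \<and> p s a \<le> exp (R/\<beta>) * pref s a" for p s a
  proof
    assume "p s a > 0 \<and> \<bar>ln (p s a / pref s a)\<bar> \<le> R/\<beta>"
    then show "exp (-(R/\<beta>)) * pref s a \<le> p s a \<and> p s a \<le> exp (R/\<beta>) * pref s a"
      using assms abs_ln_le_iff[of "p s a / pref s a"] by (simp add: field_simps)
  next
    assume bounds: "exp (-(R/\<beta>)) * pref s a \<le> p s a \<and> p s a \<le> exp (R/\<beta>) * pref s a"
    moreover have "exp (-(R/\<beta>)) * pref s a > 0"
      using assms by simp
    ultimately have "p s a > 0"
      by linarith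
    then show "p s a > 0 \<and> \<bar>ln (p s a / pref s a)\<bar> \<le> R/\<beta>"
      using assms bounds abs_ln_le_iff[of "p s a / pref s a"] by (simp add: field_simps)
  qed
  then show ?thesis
    unfolding bounded_logratio_def by blast
qed

lemma bounded_logratio_conv_pol:
  assumes "\<forall>s a. pref s a > 0" and "bounded_logratio pref R \<beta> P"
  shows "bounded_logratio pref R \<beta> (conv_pol P)"
  using assms conv_pol_pointwise_interval[of P "\<lambda>s a. exp (-(R/\<beta>)) * pref s a"
      "\<lambda>s a. exp (R/\<beta>) * pref s a"]
  by (simp add: bounded_logratio_iff_interval)

theorem lemmaH1:
  fixes pref :: "'s \<Rightarrow> 'a::finite \<Rightarrow> real"
    and r :: "'s \<Rightarrow> 'a \<Rightarrow> real"
    and \<beta> R :: real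
    and P :: "('s \<Rightarrow> 'a \<Rightarrow> real) set"
  assumes pref_policy: "is_policy pref"
    and pref_full: "\<forall>s a. pref s a > 0"
    and beta_pos: "\<beta> > 0"
    and R_pos: "R > 0"
    and r_range: "\<forall>s a. 0 \<le> r s a \<and> r s a \<le> R"
    and P_finite: "finite P"
    and P_policies: "\<forall>p\<in>P. is_policy p"
    and cond_I: "opt_policy pref \<beta> r \<in> P"
    and cond_II: "bounded_logratio pref R \<beta> P"
  shows "opt_policy pref \<beta> r \<in> conv_pol P \<and> bounded_logratio pref R \<beta> (conv_pol P)"
  using cond_I subset_conv_pol bounded_logratio_conv_pol[OF pref_full cond_II] by blast

end
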